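(* Let $G$ be a group, $E$ a real Banach space, and $f\colon G\to E$ such that $\|f(xy)+f(xy^{-1})-2f(x)\|\le c$ for all $x,y\in G$, where $c>0$. Define $c_1=c+2\|f(1)\|$, $c_2=c+\|f(1)\|$, $c_3=c+c_1$, and $c_m=c+c_1+c_{m-2}$ for $m>3$. Then for every $x\in G$ and every $m\in\mathbb{N}$, $\|f(x^m)-mf(x)\|\le c_m$. *)

theory Defs
  imports "HOL-Analysis.Analysis" "HOL-Algebra.Group"
begin

text \<open>The constants c_m of the paper, with parameters c and a = norm (f 1):
  c_1 = c + 2a, c_2 = c + a, c_3 = c + c_1, c_m = c + c_1 + c_(m-2) for m > 3.
  The value at 0 is an irrelevant convention (c_0 is not defined in the paper).\<close>
fun cconst :: "real \<Rightarrow> real \<Rightarrow> nat \<Rightarrow> real" where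
  "cconst c a 0 = 0"
| "cconst c a (Suc 0) = c + 2 * a"
| "cconst c a (Suc (Suc 0)) = c + a"
| "cconst c a (Suc (Suc (Suc 0))) = c + (c + 2 * a)"
| "cconst c a (Suc (Suc (Suc (Suc n)))) = c + (c + 2 * a) + cconst c a (Suc (Suc n))"

end

theory Submission
  imports Defs
begin

text \<open>Evaluating the hypothesis at \<open>(x, x [^] (n + 1))\<close> and at \<open>(\<one>, x [^] n)\<close> and
  subtracting cancels the unknown value \<open>f (inv (x [^] n))\<close>: passing from \<open>x [^] n\<close> to
  \<open>x [^] (n + 2)\<close> adds \<open>2 f x\<close> up to an error \<open>2c + 2 \<parallel>f \<one>\<parallel> = c + c\<^sub>1\<close>.
  Induction in steps of two from \<open>m = 2, 3\<close> accumulates exactly the constants \<open>c\<^sub>m\<close>.\<close>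

lemma norm_diff_scaleR_Suc_Suc_le:
  fixes a b v :: "'b::real_normed_vector"
  shows "norm (a - real (Suc (Suc k)) *\<^sub>R v) \<le> norm (a - b - 2 *\<^sub>R v) + norm (b - real k *\<^sub>R v)"
proof -
  have "real (Suc (Suc k)) *\<^sub>R v = 2 *\<^sub>R v + real k *\<^sub>R v"
    by (simp flip: scaleR_add_left)
  then have "a - real (Suc (Suc k)) *\<^sub>R v = (a - b - 2 *\<^sub>R v) + (b - real k *\<^sub>R v)"
    by (simp add: algebra_simps)
  then show ?thesis
    by (metis norm_triangle_ineq)
qed

locale approx_jensen = group G for G (structure) +
  fixes f :: "'a \<Rightarrow> 'b::real_normed_vector" and c :: real
  assumes jensen_defect_le: "\<lbrakk>x \<in> carrier G; y \<in> carrier G\<rbrakk> \<Longrightarrow>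
    norm (f (x \<otimes> y) + f (x \<otimes> inv y) - 2 *\<^sub>R f x) \<le> c"
begin

lemma defect_bound_nonneg: "0 \<le> c"
  using jensen_defect_le[of \<one> \<one>] by (simp add: scaleR_2)

lemma pow_two_deviation_le:
  assumes x: "x \<in> carrier G"
  shows "norm (f (x [^] (2::nat)) - 2 *\<^sub>R f x) \<le> c + norm (f \<one>)"
proof -
  have "f (x [^] (2::nat)) - 2 *\<^sub>R f x = (f (x \<otimes> x) + f (x \<otimes> inv x) - 2 *\<^sub>R f x) - f \<one>"
    using x by (simp add: numeral_2_eq_2)
  also have "norm \<dots> \<le> norm (f (x \<otimes> x) + f (x \<otimes> inv x) - 2 *\<^sub>R f x) + norm (f \<one>)"
    by (rule norm_triangle_ineq4)
  also have "\<dots> \<le> c + norm (f \<one>)"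
    using jensen_defect_le[OF x x] by simp
  finally show ?thesis .
qed

lemma pow_Suc_Suc_increment_le:
  assumes x: "x \<in> carrier G"
  shows "norm (f (x [^] Suc (Suc n)) - f (x [^] n) - 2 *\<^sub>R f x) \<le> 2 * c + 2 * norm (f \<one>)"
proof -
  have xn: "x [^] n \<in> carrier G" using x by simp
  have outer: "norm (f (x [^] Suc (Suc n)) + f (inv (x [^] n)) - 2 *\<^sub>R f x) \<le> c"
  proof -
    have "x \<otimes> x [^] Suc n = x [^] Suc (Suc n)"
      by (rule nat_pow_Suc2[OF x, symmetric])
    moreover have "x \<otimes> inv (x [^] Suc n) = inv (x [^] n)"
      using x xn by (simp add: inv_mult_group m_assoc[symmetric])
    ultimately show ?thesis
      using jensen_defect_le[OF x, of "x [^] Suc n"] x by simp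
  qed
  have inner: "norm (f (x [^] n) + f (inv (x [^] n)) - 2 *\<^sub>R f \<one>) \<le> c"
    using jensen_defect_le[of \<one> "x [^] n"] xn by simp
  have "f (x [^] Suc (Suc n)) - f (x [^] n) - 2 *\<^sub>R f x =
     (f (x [^] Suc (Suc n)) + f (inv (x [^] n)) - 2 *\<^sub>R f x)
     - (f (x [^] n) + f (inv (x [^] n)) - 2 *\<^sub>R f \<one>) - 2 *\<^sub>R f \<one>"
    by (simp add: algebra_simps)
  also have "norm \<dots> \<le> norm (f (x [^] Suc (Suc n)) + f (inv (x [^] n)) - 2 *\<^sub>R f x)
      + norm (f (x [^] n) + f (inv (x [^] n)) - 2 *\<^sub>R f \<one>) + norm (2 *\<^sub>R f \<one>)"
    by (meson add_mono norm_triangle_ineq4 order_refl order_trans)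
  also have "\<dots> \<le> 2 * c + 2 * norm (f \<one>)"
    using outer inner by simp
  finally show ?thesis .
qed

lemma pow_Suc_Suc_deviation_le:
  assumes x: "x \<in> carrier G"
  shows "norm (f (x [^] Suc (Suc n)) - real (Suc (Suc n)) *\<^sub>R f x)
           \<le> cconst c (norm (f \<one>)) (Suc (Suc n))"
proof (induction n rule: nat_induct2)
  case 0
  show ?case using pow_two_deviation_le[OF x] by (simp add: numeral_2_eq_2)
next
  case 1
  have "norm (f (x [^] Suc (Suc 1)) - real (Suc (Suc 1)) *\<^sub>R f x)
        \<le> norm (f (x [^] Suc (Suc 1)) - f (x [^] (1::nat)) - 2 *\<^sub>R f x)
          + norm (f (x [^] (1::nat)) - real 1 *\<^sub>R f x)"
    by (rule norm_diff_scaleR_Suc_Suc_le)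
  also have "\<dots> \<le> 2 * c + 2 * norm (f \<one>)"
    using pow_Suc_Suc_increment_le[OF x, of 1] x by simp
  finally show ?case by simp
next
  case (step n)
  have "norm (f (x [^] Suc (Suc (Suc (Suc n)))) - real (Suc (Suc (Suc (Suc n)))) *\<^sub>R f x)
        \<le> norm (f (x [^] Suc (Suc (Suc (Suc n)))) - f (x [^] Suc (Suc n)) - 2 *\<^sub>R f x)
          + norm (f (x [^] Suc (Suc n)) - real (Suc (Suc n)) *\<^sub>R f x)"
    by (rule norm_diff_scaleR_Suc_Suc_le)
  also have "\<dots> \<le> 2 * c + 2 * norm (f \<one>) + cconst c (norm (f \<one>)) (Suc (Suc n))"
    using pow_Suc_Suc_increment_le[OF x] step by (rule add_mono)
  also have "\<dots> = cconst c (norm (f \<one>)) (Suc (Suc (Suc (Suc n))))"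
    by simp
  finally show ?case
    by (simp only: add_2_eq_Suc')
qed

lemma pow_deviation_le:
  assumes "x \<in> carrier G" and "1 \<le> m"
  shows "norm (f (x [^] m) - real m *\<^sub>R f x) \<le> cconst c (norm (f \<one>)) m"
proof (cases "m = 1")
  case True
  then show ?thesis using assms(1) defect_bound_nonneg by simp
next
  case False
  then obtain n where "m = Suc (Suc n)"
    using assms(2) by (metis One_nat_def Suc_le_D not0_implies_Suc)
  then show ?thesis using pow_Suc_Suc_deviation_le[OF assms(1)] by simp
qed

end

theorem lemma2p3:
  fixes G (structure) and f :: "'a \<Rightarrow> 'b::banach" and c :: real
  assumes "group G"
    and "c > 0"
    and "\<And>x y. x \<in> carrier G \<Longrightarrow> y \<in> carrier G \<Longrightarrow>
           norm (f (x \<otimes> y) + f (x \<otimes> inv y) - 2 *\<^sub>R f x) \<le> c"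
    and "x \<in> carrier G" and "(m::nat) \<ge> 1"
  shows "norm (f (x [^] m) - real m *\<^sub>R f x) \<le> cconst c (norm (f \<one>)) m"
proof -
  interpret approx_jensen G f c
    using assms(1,3) by (simp add: approx_jensen_def approx_jensen_axioms_def)
  show ?thesis using pow_deviation_le assms(4,5) .
qed

end
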